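(* There exists a real binary sextic form $q\in F_{2,6}$ having two distinct signatures; i.e. the natural analogue of Sylvester's law of inertia fails for binary sextics.
   Context: $F_{2,6}$ is the space of real binary sextic forms in $x,y$. A representation of $p$ is an expression $p=\sum_{j=1}^r\lambda_j(\alpha_jx+\beta_jy)^{6}$ with $r\ge0$, $\alpha_j,\beta_j\in\mathbb R$, $0\ne\lambda_j\in\mathbb R$; it is honest if the linear forms $\alpha_jx+\beta_jy$ are pairwise non-proportional. Its badge is $(a,b)$ where $a=\#\{j:\lambda_j>0\}$, $b=\#\{j:\lambda_j<0\}$; $\mathcal B(p)$ is the set of badges of honest representations. With $(a,b)\preceq(c,d)$ iff $a\le c,b\le d$, a signature is a minimal element of $\mathcal B(p)$. *)

theory Defs
  imports Main Complex_Main
begin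

definition sextic_form :: "(real \<Rightarrow> real \<Rightarrow> real) \<Rightarrow> bool" where
  "sextic_form q \<longleftrightarrow> (\<exists>c :: nat \<Rightarrow> real. q = (\<lambda>x y. \<Sum>k\<le>6. c k * x ^ k * y ^ (6 - k)))"

definition rep_eval :: "(real \<times> real \<times> real) list \<Rightarrow> real \<Rightarrow> real \<Rightarrow> real" where
  "rep_eval R = (\<lambda>x y. \<Sum>j<length R. fst (R ! j) * (fst (snd (R ! j)) * x + snd (snd (R ! j)) * y) ^ 6)"

definition is_rep :: "(real \<Rightarrow> real \<Rightarrow> real) \<Rightarrow> (real \<times> real \<times> real) list \<Rightarrow> bool" where
  "is_rep p R \<longleftrightarrow> (\<forall>j<length R. fst (R ! j) \<noteq> 0) \<and> p = rep_eval R"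

definition honest :: "(real \<times> real \<times> real) list \<Rightarrow> bool" where
  "honest R \<longleftrightarrow> (\<forall>i<length R. \<forall>j<length R. i \<noteq> j \<longrightarrow>
      fst (snd (R ! i)) * snd (snd (R ! j)) - fst (snd (R ! j)) * snd (snd (R ! i)) \<noteq> 0)"

definition badge :: "(real \<times> real \<times> real) list \<Rightarrow> nat \<times> nat" where
  "badge R = (card {j. j < length R \<and> fst (R ! j) > 0}, card {j. j < length R \<and> fst (R ! j) < 0})"

definition badges :: "(real \<Rightarrow> real \<Rightarrow> real) \<Rightarrow> (nat \<times> nat) set" where
  "badges p = {badge R | R. is_rep p R \<and> honest R}"

definition badge_le :: "nat \<times> nat \<Rightarrow> nat \<times> nat \<Rightarrow> bool" where
  "badge_le u v \<longleftrightarrow> fst u \<le> fst v \<and> snd u \<le> snd v"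

definition is_signature :: "(real \<Rightarrow> real \<Rightarrow> real) \<Rightarrow> nat \<times> nat \<Rightarrow> bool" where
  "is_signature p s \<longleftrightarrow> s \<in> badges p \<and> (\<forall>t \<in> badges p. badge_le t s \<longrightarrow> t = s)"

end

theory Submission
  imports Defs
begin

(* The witness is q = sum_k C(6,k) mu_k x^k y^(6-k) with mu = (-1,-2,-4,-8,4,8,16).  A
   representation is a list of terms (lambda_j, alpha_j, beta_j); its evaluation functional
   L(g) = sum_j lambda_j g(alpha_j, beta_j) on sextics g is determined by the moments
   L(a^k b^(6-k)), and the list represents q exactly when these moments are the mu_k.
   For q the quartics X = a^4 + 2ab^3 and Y = 2b^4 - ab^3 are apolar: L kills X*h and Y*h for
   every quadratic h.  Taking h to be a product of linear forms through all but one or two of the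
   points shows that an honest representation with at most four terms either makes X and Y vanish
   at a nonzero point (at most three terms) or gives the quartic Y(p0) X - X(p0) Y, which has no
   a^3 b and a^2 b^2 terms, four pairwise non-proportional zeros (four terms).  Both are
   impossible, so every honest representation of q has at least five terms. *)

abbreviation lam :: "(real \<times> real \<times> real) list \<Rightarrow> nat \<Rightarrow> real" where
  "lam R j \<equiv> fst (R ! j)"

abbreviation pt :: "(real \<times> real \<times> real) list \<Rightarrow> nat \<Rightarrow> real \<times> real" where
  "pt R j \<equiv> snd (R ! j)"

definition det2 :: "real \<times> real \<Rightarrow> real \<times> real \<Rightarrow> real" where
  "det2 p q = fst p * snd q - fst q * snd p"

lemma det2_self [simp]: "det2 p p = 0"
  by (simp add: det2_def)

lemma honest_iff_det2:
  "honest R \<longleftrightarrow> (\<forall>i<length R. \<forall>j<length R. i \<noteq> j \<longrightarrow> det2 (pt R i) (pt R j) \<noteq> 0)"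
  by (simp add: honest_def det2_def)

definition lin :: "real \<times> real \<Rightarrow> real \<Rightarrow> real \<Rightarrow> real" where
  "lin p a b = snd p * a - fst p * b"

lemma lin_at: "lin p (fst q) (snd q) = det2 q p"
  by (simp add: lin_def det2_def mult.commute)

definition apolar :: "(real \<times> real \<times> real) list \<Rightarrow> (real \<Rightarrow> real \<Rightarrow> real) \<Rightarrow> real" where
  "apolar R g = (\<Sum>j<length R. lam R j * g (fst (pt R j)) (snd (pt R j)))"

definition moment :: "(real \<times> real \<times> real) list \<Rightarrow> nat \<Rightarrow> real" where
  "moment R k = apolar R (\<lambda>a b. a ^ k * b ^ (6 - k))"

lemma apolar_sextic:
  "apolar R (\<lambda>a b. \<Sum>k\<le>6. d k * a ^ k * b ^ (6 - k)) = (\<Sum>k\<le>6. d k * moment R k)"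
  unfolding moment_def apolar_def
  by (simp add: sum_distrib_left sum_distrib_right sum.swap[of _ "{..6}"] mult_ac)

lemma apolar_supported:
  assumes "S \<subseteq> {..<length R}"
    and "\<And>j. j < length R \<Longrightarrow> j \<notin> S \<Longrightarrow> g (fst (pt R j)) (snd (pt R j)) = 0"
  shows "apolar R g = (\<Sum>j\<in>S. lam R j * g (fst (pt R j)) (snd (pt R j)))"
  unfolding apolar_def using assms by (intro sum.mono_neutral_right) auto

lemma rep_eval_expansion:
  "rep_eval R x y = (\<Sum>k\<le>6. (real (6 choose k) * moment R k) * x ^ k * y ^ (6 - k))"
proof -
  have "rep_eval R x y
      = apolar R (\<lambda>a b. \<Sum>k\<le>6. (real (6 choose k) * x ^ k * y ^ (6 - k)) * a ^ k * b ^ (6 - k))"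
    by (simp add: rep_eval_def apolar_def binomial_ring power_mult_distrib mult_ac)
  then show ?thesis unfolding apolar_sextic by (simp add: mult_ac)
qed

lemma moment_of_rep:
  assumes rep: "rep_eval R = (\<lambda>x y. \<Sum>k\<le>6. c k * x ^ k * y ^ (6 - k))" and k: "k \<le> 6"
  shows "real (6 choose k) * moment R k = c k"
proof -
  have "\<forall>x. (\<Sum>k\<le>6. c k * x ^ k) = (\<Sum>k\<le>6. (real (6 choose k) * moment R k) * x ^ k)"
    using rep_eval_expansion[of R _ 1] unfolding rep by simp
  then show ?thesis using k unfolding polyfun_eq_coeffs by simp
qed

definition mu :: "nat \<Rightarrow> real" where
  "mu k = (if k \<le> 3 then - (2 ^ k) else 2 ^ k / 4)"

definition example_form :: "real \<Rightarrow> real \<Rightarrow> real" where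
  "example_form = (\<lambda>x y. \<Sum>k\<le>6. (real (6 choose k) * mu k) * x ^ k * y ^ (6 - k))"

lemma example_form_sextic: "sextic_form example_form"
  unfolding sextic_form_def example_form_def by (rule exI[of _ "\<lambda>k. real (6 choose k) * mu k"]) simp

lemma example_rep_iff_moments:
  "rep_eval R = example_form \<longleftrightarrow> (\<forall>k\<le>6. moment R k = mu k)"
proof
  assume "rep_eval R = example_form"
  then show "\<forall>k\<le>6. moment R k = mu k"
    using moment_of_rep[of R "\<lambda>k. real (6 choose k) * mu k"] by (simp add: example_form_def)
next
  assume "\<forall>k\<le>6. moment R k = mu k"
  then show "rep_eval R = example_form"
    by (intro ext) (simp add: rep_eval_expansion example_form_def)
qed

definition annX :: "real \<Rightarrow> real \<Rightarrow> real" where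
  "annX a b = a ^ 4 + 2 * a * b ^ 3"

definition annY :: "real \<Rightarrow> real \<Rightarrow> real" where
  "annY a b = 2 * b ^ 4 - a * b ^ 3"

(* Apolarity: X*h and Y*h are annihilated for every product h of two linear forms, because
   mu_(k+3) + 2 mu_k = 0 for 1 \<le> k \<le> 3 and 2 mu_k = mu_(k+1) for k \<le> 2. *)
lemma apolar_annihilators:
  assumes mom: "\<And>k. k \<le> 6 \<Longrightarrow> moment R k = mu k"
  shows "apolar R (\<lambda>a b. annX a b * lin c a b * lin d a b) = 0"
    and "apolar R (\<lambda>a b. annY a b * lin c a b * lin d a b) = 0"
proof -
  define u where "u = snd c * snd d"
  define v where "v = - (snd c * fst d + fst c * snd d)"
  define w where "w = fst c * fst d"
  have quad: "lin c a b * lin d a b = u * a^2 + v * a * b + w * b^2" for a b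
    by (simp add: lin_def u_def v_def w_def algebra_simps power2_eq_square)
  have expand_X: "(\<lambda>a b. annX a b * lin c a b * lin d a b)
      = (\<lambda>a b. \<Sum>k\<le>6. [0, 2*w, 2*v, 2*u, w, v, u] ! k * a ^ k * b ^ (6 - k))"
    by (simp add: quad annX_def numeral_eq_Suc atMost_Suc power2_eq_square power3_eq_cube
        power4_eq_xxxx algebra_simps del: sum.atMost_Suc)
  show "apolar R (\<lambda>a b. annX a b * lin c a b * lin d a b) = 0"
    unfolding expand_X apolar_sextic by (simp add: numeral_eq_Suc atMost_Suc mom mu_def)
  have expand_Y: "(\<lambda>a b. annY a b * lin c a b * lin d a b)
      = (\<lambda>a b. \<Sum>k\<le>6. [2*w, 2*v - w, 2*u - v, -u, 0, 0, 0] ! k * a ^ k * b ^ (6 - k))"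
    by (simp add: quad annY_def numeral_eq_Suc atMost_Suc power2_eq_square power3_eq_cube
        power4_eq_xxxx algebra_simps)
  show "apolar R (\<lambda>a b. annY a b * lin c a b * lin d a b) = 0"
    unfolding expand_Y apolar_sextic by (simp add: numeral_eq_Suc atMost_Suc mom mu_def)
qed

(* X + 2Y = a^4 + 4b^4, so X and Y have no common nonzero real zero. *)
lemma annihilators_common_zero:
  assumes "annX a b = 0" "annY a b = 0"
  shows "a = 0 \<and> b = 0"
proof -
  have "a ^ 4 + 4 * b ^ 4 = 0" using assms by (simp add: annX_def annY_def)
  moreover have "a ^ 4 \<ge> 0" "b ^ 4 \<ge> 0" by simp_all
  ultimately have "a ^ 4 = 0" "b ^ 4 = 0" by linarith+
  then show ?thesis by simp
qed

lemma apolar_separated: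
  assumes "S \<subseteq> {..<length R}"
    and off: "\<And>j. j < length R \<Longrightarrow> j \<notin> S \<Longrightarrow> det2 (pt R j) c * det2 (pt R j) d = 0"
  shows "apolar R (\<lambda>a b. f a b * lin c a b * lin d a b)
    = (\<Sum>j\<in>S. lam R j * f (fst (pt R j)) (snd (pt R j)) * (det2 (pt R j) c * det2 (pt R j) d))"
proof -
  have "apolar R (\<lambda>a b. f a b * lin c a b * lin d a b)
      = (\<Sum>j\<in>S. lam R j * (f (fst (pt R j)) (snd (pt R j))
          * lin c (fst (pt R j)) (snd (pt R j)) * lin d (fst (pt R j)) (snd (pt R j))))"
    using assms by (intro apolar_supported) (auto simp: lin_at)
  then show ?thesis by (simp add: lin_at mult_ac)
qed

lemma no_isolated_point:
  assumes mom: "\<And>k. k \<le> 6 \<Longrightarrow> moment R k = mu k"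
    and i: "i < length R" "lam R i \<noteq> 0"
    and off: "\<And>j. j < length R \<Longrightarrow> j \<noteq> i \<Longrightarrow> det2 (pt R j) c * det2 (pt R j) d = 0"
    and on: "det2 (pt R i) c * det2 (pt R i) d \<noteq> 0"
  shows False
proof -
  have only_i: "apolar R (\<lambda>a b. f a b * lin c a b * lin d a b)
      = lam R i * f (fst (pt R i)) (snd (pt R i)) * (det2 (pt R i) c * det2 (pt R i) d)" for f
    using apolar_separated[of "{i}" R c d f] i off by simp
  have "annX (fst (pt R i)) (snd (pt R i)) = 0" "annY (fst (pt R i)) (snd (pt R i)) = 0"
    using apolar_annihilators(1)[OF mom, of c d, unfolded only_i]
      apolar_annihilators(2)[OF mom, of c d, unfolded only_i] i(2) on by simp_all
  then have "pt R i = (0, 0)" by (metis annihilators_common_zero prod.collapse)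
  then show False using on by (simp add: det2_def)
qed

definition sparse_quartic :: "real \<Rightarrow> real \<Rightarrow> real \<Rightarrow> real \<Rightarrow> real \<Rightarrow> real" where
  "sparse_quartic A B C a b = A * a ^ 4 + B * a * b ^ 3 + C * b ^ 4"

(* The polynomial A t^4 + B t + C has at most two real roots unless it is zero: divided
   differences at three roots give A (t1^2 + t2^2 + t3^2 + t1 t2 + t1 t3 + t2 t3) = 0, and that
   symmetric form is half a sum of squares, positive for distinct roots. *)
lemma sparse_quartic_three_roots:
  fixes A B C t1 t2 t3 :: real
  assumes distinct: "t1 \<noteq> t2" "t1 \<noteq> t3" "t2 \<noteq> t3"
    and roots: "A * t1 ^ 4 + B * t1 + C = 0" "A * t2 ^ 4 + B * t2 + C = 0"
      "A * t3 ^ 4 + B * t3 + C = 0"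
  shows "A = 0 \<and> B = 0 \<and> C = 0"
proof -
  have "(t1 - t2) * (A * (t1^3 + t1^2*t2 + t1*t2^2 + t2^3) + B)
      = (A * t1 ^ 4 + B * t1 + C) - (A * t2 ^ 4 + B * t2 + C)"
    by algebra
  then have d12: "A * (t1^3 + t1^2*t2 + t1*t2^2 + t2^3) + B = 0" using distinct(1) roots by simp
  have "(t1 - t3) * (A * (t1^3 + t1^2*t3 + t1*t3^2 + t3^3) + B)
      = (A * t1 ^ 4 + B * t1 + C) - (A * t3 ^ 4 + B * t3 + C)"
    by algebra
  then have d13: "A * (t1^3 + t1^2*t3 + t1*t3^2 + t3^3) + B = 0" using distinct(2) roots by simp
  have "(t2 - t3) * (A * (t1^2 + t2^2 + t3^2 + t1*t2 + t1*t3 + t2*t3))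
      = (A * (t1^3 + t1^2*t2 + t1*t2^2 + t2^3) + B) - (A * (t1^3 + t1^2*t3 + t1*t3^2 + t3^3) + B)"
    by algebra
  then have A_sym: "A * (t1^2 + t2^2 + t3^2 + t1*t2 + t1*t3 + t2*t3) = 0"
    using distinct(3) d12 d13 by simp
  have "2 * (t1^2 + t2^2 + t3^2 + t1*t2 + t1*t3 + t2*t3) = (t1 + t2)^2 + (t1 + t3)^2 + (t2 + t3)^2"
    by algebra
  moreover have "t1 + t2 \<noteq> 0 \<or> t1 + t3 \<noteq> 0" using distinct(3) by auto
  then have "(t1 + t2)^2 + (t1 + t3)^2 + (t2 + t3)^2 > 0"
    by (smt (verit) zero_le_power2 zero_less_power2)
  ultimately have A0: "A = 0" using A_sym by simp
  then have "B * (t1 - t2) = (A * t1 ^ 4 + B * t1 + C) - (A * t2 ^ 4 + B * t2 + C)"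
    by (simp add: algebra_simps)
  then have "B * (t1 - t2) = 0" using roots(1,2) by simp
  then have "B = 0" using distinct(1) by simp
  then show ?thesis using A0 roots(1) by simp
qed

lemma sparse_quartic_dehomogenize:
  assumes "b \<noteq> 0"
  shows "sparse_quartic A B C a b = b ^ 4 * (A * (a / b) ^ 4 + B * (a / b) + C)"
  using assms by (simp add: sparse_quartic_def field_simps power_divide) (simp add: power_def)

lemma sparse_quartic_three_zeros:
  assumes off_axis: "snd p \<noteq> 0" "snd q \<noteq> 0" "snd r \<noteq> 0"
    and det: "det2 p q \<noteq> 0" "det2 p r \<noteq> 0" "det2 q r \<noteq> 0"
    and zero: "sparse_quartic A B C (fst p) (snd p) = 0" "sparse_quartic A B C (fst q) (snd q) = 0"
      "sparse_quartic A B C (fst r) (snd r) = 0"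
  shows "A = 0 \<and> B = 0 \<and> C = 0"
proof (rule sparse_quartic_three_roots)
  have slope_ne: "fst u / snd u \<noteq> fst v / snd v"
    if "snd u \<noteq> 0" "snd v \<noteq> 0" "det2 u v \<noteq> 0" for u v
    using that by (simp add: det2_def frac_eq_eq)
  show "fst p / snd p \<noteq> fst q / snd q" "fst p / snd p \<noteq> fst r / snd r"
    "fst q / snd q \<noteq> fst r / snd r"
    using slope_ne off_axis det by auto
  show "A * (fst p / snd p) ^ 4 + B * (fst p / snd p) + C = 0"
    "A * (fst q / snd q) ^ 4 + B * (fst q / snd q) + C = 0"
    "A * (fst r / snd r) ^ 4 + B * (fst r / snd r) + C = 0"
    using zero off_axis by (simp_all add: sparse_quartic_dehomogenize)
qed

(* A sparse quartic with four pairwise non-proportional zeros is zero: at most one of them lies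
   on the line b = 0, and the other three fall under the previous lemma. *)
lemma sparse_quartic_four_zeros:
  fixes p :: "nat \<Rightarrow> real \<times> real"
  assumes det: "\<And>i j. i < 4 \<Longrightarrow> j < 4 \<Longrightarrow> i \<noteq> j \<Longrightarrow> det2 (p i) (p j) \<noteq> 0"
    and zero: "\<And>i. i < 4 \<Longrightarrow> sparse_quartic A B C (fst (p i)) (snd (p i)) = 0"
  shows "A = 0 \<and> B = 0 \<and> C = 0"
proof -
  have three: "A = 0 \<and> B = 0 \<and> C = 0"
    if "i < 4" "j < 4" "k < 4" "i \<noteq> j" "i \<noteq> k" "j \<noteq> k"
      "snd (p i) \<noteq> 0" "snd (p j) \<noteq> 0" "snd (p k) \<noteq> 0" for i j k
    using that by (intro sparse_quartic_three_zeros[of "p i" "p j" "p k"]) (simp_all add: det zero)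
  have one_on_axis: "i = j" if "i < 4" "j < 4" "snd (p i) = 0" "snd (p j) = 0" for i j
    using det[of i j] that by (auto simp: det2_def)
  consider "snd (p 0) = 0" | "snd (p 1) = 0" | "snd (p 2) = 0" | "\<forall>i<3. snd (p i) \<noteq> 0"
    by (metis less_Suc_eq numeral_3_eq_3 One_nat_def less_Suc0 numeral_2_eq_2)
  then show ?thesis
  proof cases
    case 1 then show ?thesis using one_on_axis[of 0 1] one_on_axis[of 0 2] one_on_axis[of 0 3]
      by (intro three[of 1 2 3]) auto
  next
    case 2 then show ?thesis using one_on_axis[of 1 0] one_on_axis[of 1 2] one_on_axis[of 1 3]
      by (intro three[of 0 2 3]) auto
  next
    case 3 then show ?thesis using one_on_axis[of 2 0] one_on_axis[of 2 1] one_on_axis[of 2 3]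
      by (intro three[of 0 1 3]) auto
  next
    case 4 then show ?thesis by (intro three[of 0 1 2]) auto
  qed
qed

definition pencil_quartic :: "real \<times> real \<Rightarrow> real \<Rightarrow> real \<Rightarrow> real" where
  "pencil_quartic p a b = annY (fst p) (snd p) * annX a b - annX (fst p) (snd p) * annY a b"

lemma pencil_quartic_sparse:
  "pencil_quartic p a b = sparse_quartic (annY (fst p) (snd p))
     (2 * annY (fst p) (snd p) + annX (fst p) (snd p)) (- 2 * annX (fst p) (snd p)) a b"
  by (simp add: pencil_quartic_def sparse_quartic_def annX_def annY_def algebra_simps)

(* If a product of two linear forms vanishes at all points but p_i and p_m, and not at p_i,
   then the pencil quartic of p_i also vanishes at p_m: eliminate lambda_m from the two
   apolarity relations. *)
lemma paired_points_relation:
  assumes mom: "\<And>k. k \<le> 6 \<Longrightarrow> moment R k = mu k"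
    and im: "i < length R" "m < length R" "i \<noteq> m" "lam R i \<noteq> 0"
    and off: "\<And>j. j < length R \<Longrightarrow> j \<noteq> i \<Longrightarrow> j \<noteq> m \<Longrightarrow> det2 (pt R j) c * det2 (pt R j) d = 0"
    and on: "det2 (pt R i) c * det2 (pt R i) d \<noteq> 0"
  shows "pencil_quartic (pt R i) (fst (pt R m)) (snd (pt R m)) = 0"
proof -
  define h where "h j = det2 (pt R j) c * det2 (pt R j) d" for j
  have two: "apolar R (\<lambda>a b. f a b * lin c a b * lin d a b)
      = lam R i * f (fst (pt R i)) (snd (pt R i)) * h i
        + lam R m * f (fst (pt R m)) (snd (pt R m)) * h m" for f
    using apolar_separated[of "{i, m}" R c d f] im off by (simp add: h_def)
  define Xi where "Xi = annX (fst (pt R i)) (snd (pt R i))"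
  define Yi where "Yi = annY (fst (pt R i)) (snd (pt R i))"
  define Xm where "Xm = annX (fst (pt R m)) (snd (pt R m))"
  define Ym where "Ym = annY (fst (pt R m)) (snd (pt R m))"
  have E: "lam R i * Xi * h i + lam R m * Xm * h m = 0" "lam R i * Yi * h i + lam R m * Ym * h m = 0"
    using apolar_annihilators(1)[OF mom, of c d, unfolded two]
      apolar_annihilators(2)[OF mom, of c d, unfolded two]
    unfolding Xi_def Yi_def Xm_def Ym_def by simp_all
  have "(lam R i * h i) * pencil_quartic (pt R i) (fst (pt R m)) (snd (pt R m))
      = Xm * (lam R i * Yi * h i + lam R m * Ym * h m) - Ym * (lam R i * Xi * h i + lam R m * Xm * h m)"
    unfolding pencil_quartic_def Xi_def Yi_def Xm_def Ym_def by (simp add: algebra_simps)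
  then have "(lam R i * h i) * pencil_quartic (pt R i) (fst (pt R m)) (snd (pt R m)) = 0"
    using E by simp
  then show ?thesis using im on by (simp add: h_def)
qed

(* A single term lambda (alpha x + beta y)^6 cannot have moments of both signs, yet
   mu_0 = -1 < 0 < 16 = mu_6; so a representation of the example form has at least two terms. *)
lemma example_rep_two_terms:
  assumes mom: "\<And>k. k \<le> 6 \<Longrightarrow> moment R k = mu k"
  shows "2 \<le> length R"
proof (rule ccontr)
  assume "\<not> 2 \<le> length R"
  moreover have m0: "moment R 0 = -1" and m6: "moment R 6 = 16" using mom by (simp_all add: mu_def)
  ultimately have "length R = 1" by (cases "length R") (auto simp: moment_def apolar_def)
  then have "lam R 0 * snd (pt R 0) ^ 6 < 0" "lam R 0 * fst (pt R 0) ^ 6 > 0"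
    using m0 m6 by (simp_all add: moment_def apolar_def)
  moreover have "snd (pt R 0) ^ 6 \<ge> 0" "fst (pt R 0) ^ 6 \<ge> 0"
    by (simp_all add: zero_le_even_power)
  ultimately show False by (smt (verit) mult_nonneg_nonneg mult_nonpos_nonneg)
qed

(* With two or three terms, the product of the linear forms through p_1 and p_(n-1) isolates
   p_0, contradicting no_isolated_point. *)
lemma example_rep_not_two_or_three_terms:
  assumes mom: "\<And>k. k \<le> 6 \<Longrightarrow> moment R k = mu k" and wt: "lam R 0 \<noteq> 0"
    and det: "\<And>i j. i < length R \<Longrightarrow> j < length R \<Longrightarrow> i \<noteq> j \<Longrightarrow> det2 (pt R i) (pt R j) \<noteq> 0"
    and len: "length R = 2 \<or> length R = 3"
  shows False
proof (rule no_isolated_point[OF mom, of 0 "pt R 1" "pt R (length R - 1)"])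
  show "0 < length R" "lam R 0 \<noteq> 0" using len wt by auto
  show "det2 (pt R j) (pt R 1) * det2 (pt R j) (pt R (length R - 1)) = 0"
    if "j < length R" "j \<noteq> 0" for j
    using len that by (cases "j = 1") (auto simp: numeral_eq_Suc less_Suc_eq)
  have n: "0 < length R" "1 < length R" "length R - 1 < length R" "0 \<noteq> length R - 1"
    using len by auto
  show "det2 (pt R 0) (pt R 1) * det2 (pt R 0) (pt R (length R - 1)) \<noteq> 0"
    using det[OF n(1) n(2)] det[OF n(1,3,4)] by simp
qed

(* With four terms, pairing p_0 with each other point (the remaining two are cut out by the
   quadratic through them) shows that the pencil quartic of p_0 vanishes at all four points.
   Being sparse, it is zero, so X and Y vanish at p_0 and p_0 = 0, which honesty excludes. *)
lemma example_rep_not_four_terms: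
  assumes mom: "\<And>k. k \<le> 6 \<Longrightarrow> moment R k = mu k" and wt: "lam R 0 \<noteq> 0"
    and det: "\<And>i j. i < length R \<Longrightarrow> j < length R \<Longrightarrow> i \<noteq> j \<Longrightarrow> det2 (pt R i) (pt R j) \<noteq> 0"
    and len: "length R = 4"
  shows False
proof -
  have pair: "pencil_quartic (pt R 0) (fst (pt R m)) (snd (pt R m)) = 0"
    if cover: "\<And>j. j < 4 \<Longrightarrow> j \<noteq> 0 \<Longrightarrow> j \<noteq> m \<Longrightarrow> j = c \<or> j = d"
      and idx: "m < 4" "c < 4" "d < 4" "m \<noteq> 0" "c \<noteq> 0" "d \<noteq> 0" for m c d
  proof (rule paired_points_relation[OF mom, of 0 m "pt R c" "pt R d"])
    show "0 < length R" "m < length R" "0 \<noteq> m" "lam R 0 \<noteq> 0" using len idx wt by auto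
    show "det2 (pt R j) (pt R c) * det2 (pt R j) (pt R d) = 0"
      if "j < length R" "j \<noteq> 0" "j \<noteq> m" for j
      using len cover[of j] that by auto
    show "det2 (pt R 0) (pt R c) * det2 (pt R 0) (pt R d) \<noteq> 0"
      using len idx det[of 0 c] det[of 0 d] by auto
  qed
  have pencil_zero: "pencil_quartic (pt R 0) (fst (pt R m)) (snd (pt R m)) = 0" if "m < 4" for m
  proof -
    consider "m = 0" | "m = 1" | "m = 2" | "m = 3" using \<open>m < 4\<close> by linarith
    then show ?thesis
    proof cases
      case 1 then show ?thesis by (simp add: pencil_quartic_def)
    next
      case 2 then show ?thesis by (intro pair[of m 2 3]) (auto simp: numeral_eq_Suc less_Suc_eq)
    next
      case 3 then show ?thesis by (intro pair[of m 1 3]) (auto simp: numeral_eq_Suc less_Suc_eq)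
    next
      case 4 then show ?thesis by (intro pair[of m 1 2]) (auto simp: numeral_eq_Suc less_Suc_eq)
    qed
  qed
  define X0 where "X0 = annX (fst (pt R 0)) (snd (pt R 0))"
  define Y0 where "Y0 = annY (fst (pt R 0)) (snd (pt R 0))"
  have "Y0 = 0 \<and> 2 * Y0 + X0 = 0 \<and> - 2 * X0 = 0"
  proof (rule sparse_quartic_four_zeros[of "pt R"])
    show "det2 (pt R i) (pt R j) \<noteq> 0" if "i < 4" "j < 4" "i \<noteq> j" for i j
      using len that det by simp
    show "sparse_quartic Y0 (2 * Y0 + X0) (- 2 * X0) (fst (pt R i)) (snd (pt R i)) = 0"
      if "i < 4" for i
      using pencil_zero[OF that] unfolding pencil_quartic_sparse X0_def Y0_def .
  qed
  then have "pt R 0 = (0, 0)"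
    using annihilators_common_zero[of "fst (pt R 0)" "snd (pt R 0)"] unfolding X0_def Y0_def
    by (simp add: prod_eq_iff)
  then show False using len det[of 0 1] by (simp add: det2_def)
qed

lemma example_rep_length:
  assumes rep: "is_rep example_form R" and hon: "honest R"
  shows "5 \<le> length R"
proof -
  have "rep_eval R = example_form" using rep by (simp add: is_rep_def)
  then have mom: "\<And>k. k \<le> 6 \<Longrightarrow> moment R k = mu k" by (simp add: example_rep_iff_moments)
  have two: "2 \<le> length R" using example_rep_two_terms[OF mom] .
  moreover have "\<forall>j<length R. lam R j \<noteq> 0" using rep by (simp add: is_rep_def)
  ultimately have wt: "lam R 0 \<noteq> 0" by (metis less_le_trans pos2)
  have det: "\<And>i j. i < length R \<Longrightarrow> j < length R \<Longrightarrow> i \<noteq> j \<Longrightarrow> det2 (pt R i) (pt R j) \<noteq> 0"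
    using hon by (simp add: honest_iff_det2)
  show ?thesis
  proof (rule ccontr)
    assume "\<not> 5 \<le> length R"
    then consider "length R = 2 \<or> length R = 3" | "length R = 4" using two by linarith
    then show False
    proof cases
      case 1 with mom wt det show False by (rule example_rep_not_two_or_three_terms)
    next
      case 2 with mom wt det show False by (rule example_rep_not_four_terms)
    qed
  qed
qed

lemma badge_total:
  assumes "\<forall>j<length R. lam R j \<noteq> 0"
  shows "fst (badge R) + snd (badge R) = length R"
proof -
  let ?P = "{j. j < length R \<and> lam R j > 0}" and ?N = "{j. j < length R \<and> lam R j < 0}"
  have "?P \<union> ?N = {..<length R}" using assms by (auto simp: linorder_neq_iff)
  moreover have "card (?P \<union> ?N) = card ?P + card ?N" by (rule card_Un_disjoint) auto
  ultimately show ?thesis by (simp add: badge_def)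
qed

lemma signature_of_minimal_total:
  assumes s: "s \<in> badges p" and min: "\<And>t. t \<in> badges p \<Longrightarrow> fst s + snd s \<le> fst t + snd t"
  shows "is_signature p s"
  unfolding is_signature_def
proof (intro conjI ballI impI)
  fix t assume "t \<in> badges p" "badge_le t s"
  then have "fst t \<le> fst s" "snd t \<le> snd s" "fst s + snd s \<le> fst t + snd t"
    using min by (auto simp: badge_le_def)
  then show "t = s" by (simp add: prod_eq_iff)
qed (rule s)

lemma example_badge_total:
  assumes "t \<in> badges example_form"
  shows "5 \<le> fst t + snd t"
proof -
  obtain R where R: "t = badge R" "is_rep example_form R" "honest R"
    using assms by (auto simp: badges_def)
  then have "fst t + snd t = length R" using badge_total by (simp add: is_rep_def)
  then show ?thesis using example_rep_length R(2,3) by simp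
qed

lemma less_5_iff: "j < 5 \<longleftrightarrow> j = 0 \<or> j = 1 \<or> j = 2 \<or> j = 3 \<or> j = (4::nat)"
  by (simp add: numeral_eq_Suc less_Suc_eq disj_commute disj_left_commute)

lemma all_less_5: "(\<forall>i<5. P i) \<longleftrightarrow> P 0 \<and> P 1 \<and> P 2 \<and> P 3 \<and> P (4::nat)"
  unfolding less_5_iff by auto

lemma Collect_less_5: "{j. j < 5 \<and> P j} = {j \<in> {0, 1, 2, 3, 4::nat}. P j}"
  unfolding less_5_iff by auto

lemma sum_less_5: "(\<Sum>j<5. f j) = f 0 + f 1 + f 2 + f 3 + f (4::nat)"
  by (simp add: numeral_eq_Suc)

lemma all_le_6: "(\<forall>k\<le>6. P k) \<longleftrightarrow> P 0 \<and> P 1 \<and> P 2 \<and> P 3 \<and> P 4 \<and> P 5 \<and> P (6::nat)"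
  unfolding atMost_iff[symmetric] by (simp add: atMost_Suc numeral_eq_Suc all_conj_distrib conj_ac)

lemma five_term_badge:
  assumes len: "length R = 5"
    and mom: "moment R 0 = mu 0" "moment R 1 = mu 1" "moment R 2 = mu 2" "moment R 3 = mu 3"
      "moment R 4 = mu 4" "moment R 5 = mu 5" "moment R 6 = mu 6"
    and wt: "\<forall>j<5. lam R j \<noteq> 0" and hon: "honest R"
  shows "badge R \<in> badges example_form"
proof -
  have "rep_eval R = example_form" unfolding example_rep_iff_moments all_le_6 using mom by simp
  then have "is_rep example_form R" using wt len by (simp add: is_rep_def)
  then show ?thesis using hon by (auto simp: badges_def)
qed

definition rep_23 :: "(real \<times> real \<times> real) list" where
  "rep_23 = [(1/187, -6, 1), (-1/594, -1, 2), (4/27, 4, 1), (-585, 1, 0), (-5/306, 5, 2)]"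

lemma badge_23: "(2, 3) \<in> badges example_form"
proof -
  have len: "length rep_23 = 5" by (simp add: rep_23_def)
  have "badge rep_23 \<in> badges example_form"
  proof (rule five_term_badge[OF len])
    show "honest rep_23" unfolding honest_def len all_less_5 by (simp add: rep_23_def)
  qed (simp_all add: moment_def apolar_def len sum_less_5 mu_def rep_23_def all_less_5)
  moreover have "{j. j < length rep_23 \<and> lam rep_23 j > 0} = {0, 2}"
    "{j. j < length rep_23 \<and> lam rep_23 j < 0} = {1, 3, 4}"
    unfolding len Collect_less_5 by (auto simp: rep_23_def)
  ultimately show ?thesis by (simp add: badge_def eval_nat_numeral)
qed

definition rep_32 :: "(real \<times> real \<times> real) list" where
  "rep_32 = [(43/108, -1, 2), (1/9, 1, 4), (1/44, 3, 2), (-5/297, 2, 5), (-220, 0, 1)]"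

lemma badge_32: "(3, 2) \<in> badges example_form"
proof -
  have len: "length rep_32 = 5" by (simp add: rep_32_def)
  have "badge rep_32 \<in> badges example_form"
  proof (rule five_term_badge[OF len])
    show "honest rep_32" unfolding honest_def len all_less_5 by (simp add: rep_32_def)
  qed (simp_all add: moment_def apolar_def len sum_less_5 mu_def rep_32_def all_less_5)
  moreover have "{j. j < length rep_32 \<and> lam rep_32 j > 0} = {0, 1, 2}"
    "{j. j < length rep_32 \<and> lam rep_32 j < 0} = {3, 4}"
    unfolding len Collect_less_5 by (auto simp: rep_32_def)
  ultimately show ?thesis by (simp add: badge_def eval_nat_numeral)
qed

theorem corollary4p5:
  shows "\<exists>q s1 s2. sextic_form q \<and> is_signature q s1 \<and> is_signature q s2 \<and> s1 \<noteq> s2"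
proof -
  have "is_signature example_form (2, 3)"
    using badge_23 example_badge_total by (intro signature_of_minimal_total) auto
  moreover have "is_signature example_form (3, 2)"
    using badge_32 example_badge_total by (intro signature_of_minimal_total) auto
  moreover have "(2::nat, 3::nat) \<noteq> (3, 2)" by simp
  ultimately show ?thesis using example_form_sextic by blast
qed

end
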